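(* Under Strategy 2A (described in the context), let $U(\omega)$, $U_h(\omega)$, $U_s(\omega)$ be the numbers of uncles created during the attack cycle $\omega$ that are referred (in $\omega$ or a later cycle) by any nephew, by a nephew mined by the honest miners, and by a nephew mined by the attacker, respectively. Then $$\mathbb{E}[U_s]=\mathbb{E}[U]-\mathbb{E}[U_h]=q-q^{n_1+1}-\left(p^2q+\bigl(p+(1-\gamma)p^2q\bigr)pq^2\cdot\frac{1-(pq)^{n_1-1}}{1-pq}\right).$$
   Context: Honest hashrate $p$, attacker hashrate $q$, $p+q=1$, $0<q<p$; $\gamma\in[0,1]$ is the fraction of honest hashrate mining on the attacker's block during a public competition between equal-height blocks. Attack cycles are i.i.d. words in S (attacker block) and H (honest block): H, SHS, SHH, or SSwH with $w$ a Dyck word; $\mathbb{P}[H]=p$, $\mathbb{P}[SHS]=pq^2$, $\mathbb{P}[SHH]=p^2q$, $\mathbb{P}[SSwH]=q^2p(pq)^{|w|}$ ($|w|$ half the length of $w$). In SHH the second honest block is built on the attacker's block with probability $\gamma$ and on the first honest block with probability $1-\gamma$. Ethereum rules: an uncle is a non-official block whose parent is official; a nephew (official block) may refer an uncle at distance (height difference) at most $n_1$ ($n_1\ge2$ an integer); each referred uncle is referred by exactly one nephew. Strategy 2A ("brutal fork"): the attacker keeps his whole fork secret and releases it all at once at the end of the attack cycle, when an honest block would reduce his advance to one block (after a single attacker block, he publishes it to compete with the honest block); the attacker's fork wins in cycles starting with SS; all miners refer all possible uncles. *)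

theory Defs
  imports "HOL-Probability.Probability"
begin

text \<open>Letters of attack-cycle words: True = S (attacker block), False = H (honest block).
  A cycle outcome is a word together with a bit g that matters only for the word SHH:
  g = True iff the second honest block is built on the attacker's block (probability gamma).\<close>

type_synonym cycle = "bool list \<times> bool"

definition dyck :: "bool list \<Rightarrow> bool" where
  "dyck v \<longleftrightarrow> length (filter id v) = length (filter Not v) \<and>
     (\<forall>k\<le>length v. length (filter Not (take k v)) \<le> length (filter id (take k v)))"

definition cycle_prob :: "real \<Rightarrow> real \<Rightarrow> real \<Rightarrow> cycle \<Rightarrow> real" where
  "cycle_prob p q \<gamma> c = (case c of (w, g) \<Rightarrow>
     if w = [False] then (if g then 0 else p)
     else if w = [True, False, True] then (if g then 0 else p * q^2)
     else if w = [True, False, False] then (if g then \<gamma> else 1 - \<gamma>) * p^2 * q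
     else if (\<exists>v. w = True # True # v @ [False] \<and> dyck v)
       then (if g then 0 else q^2 * p * (p * q) ^ ((length w - 3) div 2))
     else 0)"

definition cycle_pmf :: "real \<Rightarrow> real \<Rightarrow> real \<Rightarrow> cycle pmf" where
  "cycle_pmf p q \<gamma> = embed_pmf (cycle_prob p q \<gamma>)"

text \<open>A block of a cycle: miner (True = attacker), parent (index in the same cycle, None = the
  official tip at the start of the cycle), whether it is official, publication time (local,
  = index of the block being mined at that moment), height relative to the cycle's start.\<close>
datatype blk = Blk (att: bool) (par: "nat option") (off: bool) (pub: nat) (hgt: nat)

definition prev_same :: "bool list \<Rightarrow> nat \<Rightarrow> nat option" where
  "prev_same w i = (if \<exists>j<i. w ! j = w ! i then Some (GREATEST j. j < i \<and> w ! j = w ! i) else None)"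

definition height_gen :: "bool list \<Rightarrow> nat \<Rightarrow> nat" where
  "height_gen w i = 1 + length (filter (\<lambda>b. b = w ! i) (take i w))"

text \<open>Block structure produced by Strategy 2A in a cycle (blocks in mining order).\<close>
definition blocks :: "cycle \<Rightarrow> blk list" where
  "blocks c = (case c of (w, g) \<Rightarrow>
     if w = [True, False, True] then
       [Blk True None True 1 1, Blk False None False 1 1, Blk True (Some 0) True 2 2]
     else if w = [True, False, False] then
       [Blk True None g 1 1, Blk False None (\<not> g) 1 1,
        Blk False (Some (if g then 0 else 1)) True 2 2]
     else map (\<lambda>i. Blk (w ! i) (prev_same w i) (if w ! i then True else w = [False])
                      (if w ! i then length w - 1 else i) (height_gen w i)) [0..<length w])"

definition offlen :: "cycle \<Rightarrow> nat" where
  "offlen c = length (filter off (blocks c))"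

text \<open>Global time offset and height offset of the k-th cycle of the sequence.\<close>
definition toff :: "cycle stream \<Rightarrow> nat \<Rightarrow> nat" where
  "toff xs k = (\<Sum>i<k. length (fst (xs !! i)))"

definition hoff :: "cycle stream \<Rightarrow> nat \<Rightarrow> nat" where
  "hoff xs k = (\<Sum>i<k. offlen (xs !! i))"

definition is_uncle :: "cycle \<Rightarrow> nat \<Rightarrow> bool" where
  "is_uncle c i \<longleftrightarrow> i < length (blocks c) \<and> \<not> off (blocks c ! i) \<and>
     (case par (blocks c ! i) of None \<Rightarrow> True | Some j \<Rightarrow> off (blocks c ! j))"

text \<open>Block j of cycle k (official) is able to refer block i of cycle 0 (an uncle):
  height distance between 1 and n1 and the uncle is known to the nephew's miner when
  the nephew is mined.\<close>
definition can_refer :: "nat \<Rightarrow> cycle stream \<Rightarrow> nat \<Rightarrow> nat \<Rightarrow> nat \<Rightarrow> bool" where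
  "can_refer n1 xs i k j \<longleftrightarrow>
     (let ub = blocks (xs !! 0) ! i; nb = blocks (xs !! k) ! j in
      j < length (blocks (xs !! k)) \<and> off nb \<and>
      hgt ub < hoff xs k + hgt nb \<and> hoff xs k + hgt nb \<le> hgt ub + n1 \<and>
      (pub ub < toff xs k + j \<or> (att nb \<and> att ub \<and> i < toff xs k + j)))"

definition ref_heights :: "nat \<Rightarrow> cycle stream \<Rightarrow> nat \<Rightarrow> nat set" where
  "ref_heights n1 xs i = {h. \<exists>k j. can_refer n1 xs i k j \<and> h = hoff xs k + hgt (blocks (xs !! k) ! j)}"

definition referred :: "nat \<Rightarrow> cycle stream \<Rightarrow> nat \<Rightarrow> bool" where
  "referred n1 xs i \<longleftrightarrow> ref_heights n1 xs i \<noteq> {}"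

text \<open>The referring nephew is the first official block (lowest height) able to refer it.\<close>
definition referred_by :: "bool \<Rightarrow> nat \<Rightarrow> cycle stream \<Rightarrow> nat \<Rightarrow> bool" where
  "referred_by a n1 xs i \<longleftrightarrow> referred n1 xs i \<and>
     (\<exists>k j. can_refer n1 xs i k j \<and>
        hoff xs k + hgt (blocks (xs !! k) ! j) = (LEAST h. h \<in> ref_heights n1 xs i) \<and>
        att (blocks (xs !! k) ! j) = a)"

definition U :: "nat \<Rightarrow> cycle stream \<Rightarrow> real" where
  "U n1 xs = real (card {i. is_uncle (xs !! 0) i \<and> referred n1 xs i})"

definition U_h :: "nat \<Rightarrow> cycle stream \<Rightarrow> real" where
  "U_h n1 xs = real (card {i. is_uncle (xs !! 0) i \<and> referred_by False n1 xs i})"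

definition U_s :: "nat \<Rightarrow> cycle stream \<Rightarrow> real" where
  "U_s n1 xs = real (card {i. is_uncle (xs !! 0) i \<and> referred_by True n1 xs i})"

end

theory Submission
  imports Defs
begin

(* Only the first two cycles matter: whenever an uncle of the first cycle can be referred at
   all, its lowest possible nephew lies in the first or in the second cycle. The cycles SHS and
   SHH have a single uncle, referred inside the cycle by the official block at height 2. A cycle
   SSwH has a single uncle, its first honest block, at height 1; it is referable iff the run of
   leading S blocks of SSw has length at most n1. The attacker refers it himself unless no S
   follows the first H, which for a Dyck word w means w = S^a H^a; then the nephew is the
   height-1 block of the next cycle, honest with probability p + (1 - gamma) p^2 q. What remains
   are sums over Dyck words weighted by (pq)^|w|, computed from their generating function
   T = 1 + pq T^2 = 1/p. *)

section \<open>Dyck words and their generating function\<close>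

definition balance :: "bool list \<Rightarrow> int" where
  "balance v = int (length (filter id v)) - int (length (filter Not v))"

lemma balance_Nil [simp]: "balance [] = 0"
  and balance_Cons [simp]: "balance (x # v) = (if x then 1 else -1) + balance v"
  and balance_append [simp]: "balance (u @ v) = balance u + balance v"
  by (auto simp: balance_def)

lemma balance_replicate: "balance (replicate n True) = int n" "balance (replicate n False) = - int n"
  by (induction n) auto

lemma dyck_iff_balance: "dyck v \<longleftrightarrow> balance v = 0 \<and> (\<forall>k. 0 \<le> balance (take k v))"
proof -
  have "(\<forall>k\<le>length v. 0 \<le> balance (take k v)) \<longleftrightarrow> (\<forall>k. 0 \<le> balance (take k v))"
    by (metis nle_le take_all)
  then show ?thesis unfolding dyck_def balance_def by auto
qed

lemma dyck_Nil [simp]: "dyck []"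
  by (simp add: dyck_iff_balance)

lemma length_dyck: "dyck v \<Longrightarrow> length v = 2 * length (filter id v)"
  using sum_length_filter_compl[of id v] by (simp add: dyck_iff_balance balance_def comp_def)

lemma dyck_first_return:
  assumes "dyck a" "dyck b" shows "dyck (True # a @ False # b)"
proof -
  have a: "balance a = 0" "\<And>k. 0 \<le> balance (take k a)"
    and b: "balance b = 0" "\<And>k. 0 \<le> balance (take k b)"
    using assms by (auto simp: dyck_iff_balance)
  have "0 \<le> balance (take k (True # a @ False # b))" for k
  proof (cases k)
    case (Suc k')
    show ?thesis
    proof (cases "k' \<le> length a")
      case True
      then show ?thesis using Suc a(2)[of k'] by simp
    next
      case False
      then obtain r where "k' - length a = Suc r" by (cases "k' - length a") auto
      then show ?thesis using Suc False a b(2)[of r] by simp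
    qed
  qed simp
  then show ?thesis using a b by (simp add: dyck_iff_balance)
qed

lemma dyck_drop:
  assumes "dyck v" "balance (take m v) = 0"
  shows "dyck (drop m v)"
proof -
  have v: "balance v = 0" "\<And>k. 0 \<le> balance (take k v)"
    using assms(1) by (auto simp: dyck_iff_balance)
  have "balance v = balance (take m v) + balance (drop m v)"
    by (metis append_take_drop_id balance_append)
  then have "balance (drop m v) = 0" using v(1) assms(2) by simp
  moreover have "0 \<le> balance (take j (drop m v))" for j
    using v(2)[of "m + j"] assms(2) by (simp add: take_add)
  ultimately show ?thesis by (simp add: dyck_iff_balance)
qed

lemma dyck_primitive:
  assumes bal: "balance u = 0" and pos: "\<And>k. 0 < k \<Longrightarrow> k < length u \<Longrightarrow> 0 < balance (take k u)"
    and "u \<noteq> []"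
  shows "\<exists>a. dyck a \<and> u = True # a @ [False]"
proof -
  obtain x u' where u: "u = x # u'" using \<open>u \<noteq> []\<close> by (cases u) auto
  have "u' \<noteq> []" using bal u by (cases x) auto
  then obtain a y where u': "u' = a @ [y]" by (cases u' rule: rev_exhaust) auto
  have len: "length u = length a + 2" using u u' by simp
  have "0 < balance (take 1 u)" using pos[of 1] len by simp
  then have x: x using u by (cases x) auto
  have "0 < balance (take (length a + 1) u)" using pos[of "length a + 1"] len by simp
  then have "0 \<le> balance a" using u u' x by simp
  then have y: "\<not> y" and a_bal: "balance a = 0" using bal u u' x by (auto split: if_splits)
  have "0 \<le> balance (take j a)" for j
  proof (cases "j < length a")
    case True
    then have "0 < balance (take (Suc j) u)" using pos[of "Suc j"] len by simp
    then show ?thesis using u u' x True by simp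
  qed (simp add: a_bal)
  then have "dyck a" using a_bal by (simp add: dyck_iff_balance)
  then show ?thesis using u u' x y by auto
qed

lemma dyck_first_return_decomp:
  assumes "dyck v" "v \<noteq> []"
  shows "\<exists>a b. dyck a \<and> dyck b \<and> v = True # a @ False # b"
proof -
  have v: "balance v = 0" "\<And>k. 0 \<le> balance (take k v)"
    using assms(1) by (auto simp: dyck_iff_balance)
  define P where "P k \<longleftrightarrow> 0 < k \<and> balance (take k v) = 0" for k
  have "P (length v)" using v assms(2) by (simp add: P_def)
  define m where "m = (LEAST k. P k)"
  have Pm: "P m" unfolding m_def by (rule LeastI) fact
  have "m \<le> length v" unfolding m_def by (rule Least_le) fact
  have "\<exists>a. dyck a \<and> take m v = True # a @ [False]"
  proof (rule dyck_primitive)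
    show "balance (take m v) = 0" "take m v \<noteq> []" using Pm assms(2) by (auto simp: P_def)
    fix k assume "0 < k" "k < length (take m v)"
    moreover from this have "\<not> P k" unfolding m_def using not_less_Least by auto
    ultimately show "0 < balance (take k (take m v))"
      using v(2)[of k] by (simp add: P_def le_less)
  qed
  then obtain a where "dyck a" "take m v = True # a @ [False]" by blast
  moreover have "dyck (drop m v)" using assms(1) Pm by (simp add: dyck_drop P_def)
  moreover have "v = take m v @ drop m v" by simp
  ultimately show ?thesis by (intro exI[of _ a] exI[of _ "drop m v"]) auto
qed

lemma dyck_first_return_inj:
  assumes "dyck a" "dyck a'" "True # a @ False # b = True # a' @ False # b'"
  shows "a = a' \<and> b = b'"
proof -
  have e: "a @ False # b = a' @ False # b'" using assms(3) by simp
  have no_shorter: False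
    if "dyck u" "dyck u'" "u @ False # r = u' @ False # r'" "length u < length u'" for u u' r r'
  proof -
    have "take (Suc (length u)) u' = take (Suc (length u)) (u' @ False # r')"
      using that(4) by simp
    also have "\<dots> = u @ [False]" by (simp flip: that(3))
    finally have "balance (take (Suc (length u)) u') = -1" using that(1) by (simp add: dyck_iff_balance)
    then show False using that(2) by (simp add: dyck_iff_balance) (metis neg_0_le_iff_le not_one_le_zero)
  qed
  have "length a = length a'"
    using no_shorter[OF assms(1,2) e] no_shorter[OF assms(2,1) e[symmetric]] by (metis linorder_neqE_nat)
  then show ?thesis using e by simp
qed

definition mountain :: "nat \<Rightarrow> bool list" where
  "mountain a = replicate a True @ replicate a False"

lemma dyck_mountain: "dyck (mountain a)"
proof -
  have "0 \<le> balance (take k (mountain a))" for k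
    by (cases "k \<le> a") (simp_all add: mountain_def balance_replicate min_def)
  then show ?thesis by (simp add: dyck_iff_balance mountain_def balance_replicate)
qed

lemma length_mountain: "length (mountain a) = 2 * a"
  by (simp add: mountain_def)

lemma inj_mountain: "inj mountain"
  by (rule injI) (metis length_mountain mult_left_cancel zero_neq_numeral)

definition S_run :: "bool list \<Rightarrow> nat" where
  "S_run v = length (takeWhile id v)"

lemma take_eq_replicate_True_iff: "take k v = replicate k True \<longleftrightarrow> k \<le> S_run v"
proof (induction v arbitrary: k)
  case (Cons b v)
  then show ?case by (cases k) (auto simp: S_run_def)
qed (auto simp: S_run_def)

lemma S_run_le_length: "S_run v \<le> length v"
  by (simp add: S_run_def length_takeWhile_le)

lemma nth_less_S_run: "t < S_run v \<Longrightarrow> v ! t"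
  by (metis S_run_def id_apply nth_mem set_takeWhileD takeWhile_nth)

lemma nth_S_run: "S_run v < length v \<Longrightarrow> \<not> v ! S_run v"
  by (metis S_run_def id_apply nth_length_takeWhile)

lemma S_run_append_False: "S_run (a @ False # b) = S_run a"
  by (induction a) (simp_all add: S_run_def)

lemma S_run_mountain: "S_run (mountain a) = a"
  by (cases a) (simp_all add: mountain_def S_run_def takeWhile_append)

lemma dyck_all_S_first_iff_mountain:
  assumes "dyck v"
  shows "length (filter id v) = S_run v \<longleftrightarrow> v \<in> range mountain"
proof
  assume run: "length (filter id v) = S_run v"
  define a where "a = S_run v"
  define d where "d = dropWhile id v"
  have "takeWhile id v = replicate a True"
    unfolding a_def S_run_def by (metis (full_types) id_apply replicate_length_same set_takeWhileD)
  then have v: "v = replicate a True @ d"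
    unfolding d_def by (metis takeWhile_dropWhile_id)
  then have "length (filter id v) = a + length (filter id d)" by (simp add: filter_replicate)
  then have "length (filter id d) = 0" using run unfolding a_def by simp
  then have d_False: "set d \<subseteq> {False}" by (auto simp: filter_empty_conv)
  then have d: "d = replicate (length d) False"
    by (metis replicate_eqI singletonD subset_iff)
  have "filter Not d = d" using d_False by (auto simp: filter_id_conv)
  then have "length (filter Not v) = length d" using v by (simp add: filter_replicate)
  then have "a = length d" using assms run unfolding a_def by (simp add: dyck_def)
  then show "v \<in> range mountain" using v d by (auto simp: mountain_def)
next
  assume "v \<in> range mountain"
  then obtain a where "v = mountain a" by blast
  then show "length (filter id v) = S_run v" by (simp add: S_run_mountain) (simp add: mountain_def)
qed

abbreviation esum :: "('a \<Rightarrow> ennreal) \<Rightarrow> ennreal" where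
  "esum f \<equiv> \<integral>\<^sup>+x. f x \<partial>count_space UNIV"

lemma esum_mult_esum: "esum (\<lambda>a. esum (\<lambda>b. f a * g b)) = esum f * esum g"
  by (simp add: nn_integral_cmult nn_integral_multc)

definition dyck_weight :: "real \<Rightarrow> bool list \<Rightarrow> ennreal" where
  "dyck_weight x v = (if dyck v then ennreal (x ^ (length v div 2)) else 0)"

lemma dyck_weight_first_return:
  assumes "0 \<le> x" "dyck a" "dyck b"
  shows "dyck_weight x (True # a @ False # b) = ennreal x * (dyck_weight x a * dyck_weight x b)"
proof -
  have "length (True # a @ False # b) div 2 = Suc (length a div 2 + length b div 2)"
    using length_dyck[OF assms(2)] length_dyck[OF assms(3)] by simp
  then show ?thesis
    using assms dyck_first_return[OF assms(2,3)] by (simp add: dyck_weight_def ennreal_mult' power_add)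
qed

lemma esum_dyck_first_return:
  assumes x: "0 \<le> x"
  shows "esum (\<lambda>v. dyck_weight x v * h v) =
     h [] + ennreal x * esum (\<lambda>a. esum (\<lambda>b. dyck_weight x a * dyck_weight x b * h (True # a @ False # b)))"
proof -
  define \<phi> where "\<phi> = (\<lambda>(a::bool list, b::bool list). True # a @ False # b)"
  define D2 where "D2 = {(a, b). dyck a \<and> dyck b}"
  have bij: "bij_betw \<phi> D2 {v. dyck v \<and> v \<noteq> []}"
  proof (rule bij_betw_imageI)
    show "inj_on \<phi> D2"
      by (rule inj_onI) (auto simp: \<phi>_def D2_def dest: dyck_first_return_inj)
    show "\<phi> ` D2 = {v. dyck v \<and> v \<noteq> []}"
      using dyck_first_return dyck_first_return_decomp
      by (fastforce simp: \<phi>_def D2_def image_iff)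
  qed
  have "esum (\<lambda>v. dyck_weight x v * h v) =
      esum (\<lambda>v. h [] * indicator {[]} v + dyck_weight x v * h v * indicator {v. dyck v \<and> v \<noteq> []} v)"
    by (intro nn_integral_cong) (auto simp: dyck_weight_def indicator_def)
  also have "\<dots> = h [] + (\<integral>\<^sup>+v. dyck_weight x v * h v \<partial>count_space {v. dyck v \<and> v \<noteq> []})"
    by (simp add: nn_integral_add nn_integral_cmult nn_integral_count_space_indicator)
  also have "(\<integral>\<^sup>+v. dyck_weight x v * h v \<partial>count_space {v. dyck v \<and> v \<noteq> []}) =
      (\<integral>\<^sup>+z. dyck_weight x (\<phi> z) * h (\<phi> z) \<partial>count_space D2)"
    by (rule nn_integral_bij_count_space[OF bij, symmetric])
  also have "\<dots> = esum (\<lambda>z. dyck_weight x (\<phi> z) * h (\<phi> z) * indicator D2 z)"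
    by (simp add: nn_integral_count_space_indicator)
  also have "\<dots> = esum (\<lambda>z. ennreal x * (dyck_weight x (fst z) * dyck_weight x (snd z) * h (\<phi> z)))"
  proof (rule nn_integral_cong)
    fix z :: "bool list \<times> bool list"
    obtain a b where z: "z = (a, b)" by (cases z)
    show "dyck_weight x (\<phi> z) * h (\<phi> z) * indicator D2 z =
        ennreal x * (dyck_weight x (fst z) * dyck_weight x (snd z) * h (\<phi> z))"
      using dyck_weight_first_return[OF x, of a b]
      by (cases "dyck a \<and> dyck b") (auto simp: z D2_def \<phi>_def dyck_weight_def mult.assoc)
  qed
  also have "\<dots> = ennreal x * esum (\<lambda>a. esum (\<lambda>b. dyck_weight x a * dyck_weight x b * h (True # a @ False # b)))"
    by (simp add: nn_integral_cmult nn_integral_fst_count_space[symmetric] \<phi>_def case_prod_beta)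
  finally show ?thesis .
qed

definition dyck_gf_upto :: "real \<Rightarrow> nat \<Rightarrow> ennreal" where
  "dyck_gf_upto x N = esum (\<lambda>v. dyck_weight x v * indicator {v. length v \<le> 2 * N} v)"

lemma dyck_gf_upto_0: "0 \<le> x \<Longrightarrow> dyck_gf_upto x 0 = 1"
  unfolding dyck_gf_upto_def by (subst esum_dyck_first_return) (auto simp: indicator_def)

lemma dyck_gf_upto_Suc:
  assumes x: "0 \<le> x"
  shows "dyck_gf_upto x (Suc N) \<le> 1 + ennreal x * (dyck_gf_upto x N * dyck_gf_upto x N)"
proof -
  let ?I = "\<lambda>N. indicator {v::bool list. length v \<le> 2 * N}"
  have "dyck_gf_upto x (Suc N) = 1 + ennreal x * esum (\<lambda>a. esum (\<lambda>b.
      dyck_weight x a * dyck_weight x b * ?I (Suc N) (True # a @ False # b)))"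
    unfolding dyck_gf_upto_def by (subst esum_dyck_first_return[OF x]) (simp add: indicator_def)
  also have "\<dots> \<le> 1 + ennreal x * esum (\<lambda>a. esum (\<lambda>b.
      (dyck_weight x a * ?I N a) * (dyck_weight x b * ?I N b)))"
    by (intro add_mono mult_left_mono nn_integral_mono) (auto simp: indicator_def)
  also have "\<dots> = 1 + ennreal x * (dyck_gf_upto x N * dyck_gf_upto x N)"
    unfolding esum_mult_esum dyck_gf_upto_def ..
  finally show ?thesis .
qed

locale hashrates =
  fixes p q :: real
  assumes q_pos: "0 < q" and q_less_p: "q < p" and p_plus_q: "p + q = 1"
begin

lemma p_pos: "0 < p"
  using q_pos q_less_p by simp

lemma pq_nonneg: "0 \<le> p * q"
  using p_pos q_pos by simp

lemma pq_less_1: "p * q < 1"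
  using mult_strict_mono[of p 1 q 1] p_pos q_pos p_plus_q by simp

lemma dyck_gf_upto_le: "dyck_gf_upto (p * q) N \<le> ennreal (1 / p)"
proof (induction N)
  case 0
  then show ?case using p_pos p_plus_q q_pos by (simp add: dyck_gf_upto_0 pq_nonneg)
next
  case (Suc N)
  have "dyck_gf_upto (p * q) (Suc N) \<le> 1 + ennreal (p * q) * (dyck_gf_upto (p * q) N * dyck_gf_upto (p * q) N)"
    by (rule dyck_gf_upto_Suc[OF pq_nonneg])
  also have "\<dots> \<le> 1 + ennreal (p * q) * (ennreal (1 / p) * ennreal (1 / p))"
    using Suc.IH by (intro add_mono mult_mono order_refl) auto
  also have "\<dots> = ennreal (1 + p * q * (1 / p * (1 / p)))"
    using p_pos q_pos divide_nonneg_nonneg[of q p] by (simp flip: ennreal_mult)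
  also have "1 + p * q * (1 / p * (1 / p)) = 1 / p"
    using p_pos p_plus_q by (simp add: field_simps)
  finally show ?case .
qed

lemma dyck_gf_le: "esum (dyck_weight (p * q)) \<le> ennreal (1 / p)"
proof -
  have "esum (dyck_weight (p * q)) = esum (\<lambda>v. SUP N. dyck_weight (p * q) v * indicator {v. length v \<le> 2 * N} v)"
  proof (intro nn_integral_cong antisym)
    fix v :: "bool list"
    show "dyck_weight (p * q) v \<le> (SUP N. dyck_weight (p * q) v * indicator {v. length v \<le> 2 * N} v)"
      by (rule SUP_upper2[of "length v"]) (auto simp: indicator_def)
  qed (auto intro!: SUP_least simp: indicator_def)
  also have "\<dots> = (SUP N. dyck_gf_upto (p * q) N)"
    unfolding dyck_gf_upto_def
    by (rule nn_integral_monotone_convergence_SUP)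
      (auto simp: incseq_def le_fun_def indicator_def intro!: mult_left_mono)
  also have "\<dots> \<le> ennreal (1 / p)"
    by (rule SUP_least) (rule dyck_gf_upto_le)
  finally show ?thesis .
qed

text \<open>The generating function \<open>T\<close> solves \<open>T = 1 + pq T\<^sup>2\<close>, whose roots are \<open>1/p\<close> and \<open>1/q\<close>;
  the a priori bound \<open>T \<le> 1/p < 1/q\<close> picks the right one.\<close>
lemma dyck_gf: "esum (dyck_weight (p * q)) = ennreal (1 / p)"
proof -
  define T where "T = esum (dyck_weight (p * q))"
  have "esum (\<lambda>v. dyck_weight (p * q) v * 1) =
      1 + ennreal (p * q) * esum (\<lambda>a. esum (\<lambda>b. dyck_weight (p * q) a * dyck_weight (p * q) b * 1))"
    by (rule esum_dyck_first_return[OF pq_nonneg])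
  then have eq: "T = 1 + ennreal (p * q) * (T * T)"
    unfolding T_def by (simp only: mult_1_right esum_mult_esum)
  have le: "T \<le> ennreal (1 / p)" unfolding T_def by (rule dyck_gf_le)
  then obtain t where t: "T = ennreal t" "0 \<le> t"
    by (cases T rule: ennreal_cases) (auto simp: top_unique)
  have "t \<le> 1 / p" using le t p_pos by (simp add: ennreal_le_iff)
  have "ennreal t = ennreal (1 + p * q * (t * t))"
    using eq t pq_nonneg by (simp add: ennreal_mult' ennreal_plus)
  then have "t = 1 + p * q * (t * t)" using t pq_nonneg by (subst (asm) ennreal_inj) auto
  then have "(p * t - 1) * (q * t - 1) = 0"
    using p_plus_q by (simp add: algebra_simps) (metis add_diff_cancel_left' distrib_right mult.commute mult_1 mult.assoc)
  moreover have "q * t \<noteq> 1"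
  proof
    assume "q * t = 1"
    then have "t = 1 / q" using q_pos by (simp add: field_simps)
    then have "1 / q \<le> 1 / p" using \<open>t \<le> 1 / p\<close> by simp
    moreover have "1 / p < 1 / q" using q_pos q_less_p by (simp add: frac_less2)
    ultimately show False by simp
  qed
  ultimately have "p * t = 1" by simp
  then have "t = 1 / p" using p_pos by (simp add: field_simps)
  then show ?thesis using t unfolding T_def by simp
qed

lemma dyck_gf_S_prefix:
  "esum (\<lambda>v. dyck_weight (p * q) v * indicator {v. take k v = replicate k True} v) = ennreal (q ^ k / p)"
proof (induction k)
  case 0
  then show ?case using dyck_gf by simp
next
  case (Suc k)
  have take_prefix: "take k (a @ False # b) = replicate k True \<longleftrightarrow> take k a = replicate k True" for a b
    by (simp only: take_eq_replicate_True_iff S_run_append_False)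
  have "esum (\<lambda>v. dyck_weight (p * q) v * indicator {v. take (Suc k) v = replicate (Suc k) True} v) =
      ennreal (p * q) * esum (\<lambda>a. esum (\<lambda>b. (dyck_weight (p * q) a * indicator {v. take k v = replicate k True} a)
        * dyck_weight (p * q) b))"
    by (subst esum_dyck_first_return[OF pq_nonneg]) (simp add: indicator_def take_prefix mult_ac del: take_append)
  also have "\<dots> = ennreal (p * q) * (ennreal (q ^ k / p) * ennreal (1 / p))"
    by (simp only: esum_mult_esum Suc.IH dyck_gf)
  also have "\<dots> = ennreal (q ^ Suc k / p)"
    using p_pos q_pos by (simp add: ennreal_mult[symmetric] field_simps)
  finally show ?case .
qed

lemma dyck_gf_mountains:
  "esum (\<lambda>v. dyck_weight (p * q) v * indicator (mountain ` {..<n}) v) = ennreal (\<Sum>a<n. (p * q) ^ a)"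
proof -
  have "esum (\<lambda>v. dyck_weight (p * q) v * indicator (mountain ` {..<n}) v) =
      (\<Sum>v\<in>mountain ` {..<n}. dyck_weight (p * q) v * indicator (mountain ` {..<n}) v)"
    by (rule nn_integral_count_space') auto
  also have "\<dots> = (\<Sum>a<n. ennreal ((p * q) ^ a))"
    by (subst sum.reindex) (auto intro!: sum.cong intro: inj_on_subset[OF inj_mountain]
        simp: dyck_weight_def dyck_mountain length_mountain)
  finally show ?thesis using pq_nonneg by (simp add: sum_ennreal)
qed

end

section \<open>The law of an attack cycle\<close>

abbreviation cycle_H :: cycle where "cycle_H \<equiv> ([False], False)"
abbreviation cycle_SHS :: cycle where "cycle_SHS \<equiv> ([True, False, True], False)"
abbreviation cycle_SHH_on_S :: cycle where "cycle_SHH_on_S \<equiv> ([True, False, False], True)"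
abbreviation cycle_SHH_on_H :: cycle where "cycle_SHH_on_H \<equiv> ([True, False, False], False)"

definition ss_word :: "bool list \<Rightarrow> bool list" where
  "ss_word v = True # True # v @ [False]"

lemma length_ss_word: "length (ss_word v) = length v + 3"
  by (simp add: ss_word_def)

definition ss_cycle :: "bool list \<Rightarrow> cycle" where
  "ss_cycle v = (ss_word v, False)"

lemma fst_ss_cycle: "fst (ss_cycle v) = ss_word v"
  by (simp add: ss_cycle_def)

lemma inj_ss_cycle: "inj ss_cycle"
  by (rule injI) (simp add: ss_cycle_def ss_word_def)

lemma ss_cycle_neq [simp]:
  "ss_cycle v \<noteq> cycle_H" "ss_cycle v \<noteq> cycle_SHS" "ss_cycle v \<noteq> cycle_SHH_on_S" "ss_cycle v \<noteq> cycle_SHH_on_H"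
  "cycle_H \<noteq> ss_cycle v" "cycle_SHS \<noteq> ss_cycle v" "cycle_SHH_on_S \<noteq> ss_cycle v" "cycle_SHH_on_H \<noteq> ss_cycle v"
  by (auto simp: ss_cycle_def ss_word_def)

definition regular_cycle :: "cycle \<Rightarrow> bool" where
  "regular_cycle c \<longleftrightarrow> c \<in> {cycle_H, cycle_SHS, cycle_SHH_on_S, cycle_SHH_on_H} \<or> (\<exists>v. dyck v \<and> c = ss_cycle v)"

lemma cycle_prob_simps:
  "cycle_prob p q \<gamma> cycle_H = p" "cycle_prob p q \<gamma> cycle_SHS = p * q^2"
  "cycle_prob p q \<gamma> cycle_SHH_on_S = \<gamma> * p^2 * q" "cycle_prob p q \<gamma> cycle_SHH_on_H = (1 - \<gamma>) * p^2 * q"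
  "cycle_prob p q \<gamma> (ss_cycle v) = (if dyck v then q^2 * p * (p * q) ^ (length v div 2) else 0)"
  by (auto simp: cycle_prob_def ss_cycle_def ss_word_def)

lemma cycle_prob_irregular: "\<not> regular_cycle c \<Longrightarrow> cycle_prob p q \<gamma> c = 0"
  by (auto simp: cycle_prob_def regular_cycle_def ss_cycle_def ss_word_def split: prod.splits)

locale attack = hashrates +
  fixes \<gamma> :: real
  assumes gamma_nonneg: "0 \<le> \<gamma>" and gamma_le_1: "\<gamma> \<le> 1"
begin

lemma cycle_prob_nonneg: "0 \<le> cycle_prob p q \<gamma> c"
  using p_pos q_pos gamma_nonneg gamma_le_1 unfolding cycle_prob_def by (auto split: prod.splits)

lemma esum_cycle_prob:
  assumes F: "\<And>c. 0 \<le> F c" and K: "0 \<le> K"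
    and sum_ss: "esum (\<lambda>v. dyck_weight (p * q) v * ennreal (F (ss_cycle v))) = ennreal K"
  shows "esum (\<lambda>c. ennreal (cycle_prob p q \<gamma> c * F c)) =
    ennreal (p * F cycle_H + p * q^2 * F cycle_SHS + \<gamma> * p^2 * q * F cycle_SHH_on_S
      + (1 - \<gamma>) * p^2 * q * F cycle_SHH_on_H + q^2 * p * K)"
proof -
  let ?special = "[cycle_H, cycle_SHS, cycle_SHH_on_S, cycle_SHH_on_H]"
  let ?f = "\<lambda>c. ennreal (cycle_prob p q \<gamma> c * F c)"
  have split: "?f c = (\<Sum>d\<leftarrow>?special. ?f d * indicator {d} c) + ?f c * indicator (range ss_cycle) c" for c
    using cycle_prob_irregular[of c p q \<gamma>]
    by (auto simp: indicator_def regular_cycle_def image_iff)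
  have "esum (\<lambda>c. ?f c * indicator (range ss_cycle) c) = esum (\<lambda>v. ?f (ss_cycle v))"
    by (simp add: nn_integral_count_space_indicator[symmetric]
        nn_integral_bij_count_space[OF inj_on_imp_bij_betw[OF inj_ss_cycle], symmetric])
  also have "\<dots> = esum (\<lambda>v. ennreal (q^2 * p) * (dyck_weight (p * q) v * ennreal (F (ss_cycle v))))"
  proof (rule nn_integral_cong)
    fix v :: "bool list"
    define w where "w = (if dyck v then (p * q) ^ (length v div 2) else 0)"
    have nonneg: "0 \<le> q^2 * p" "0 \<le> w" "0 \<le> F (ss_cycle v)"
      using pq_nonneg p_pos F by (simp_all add: w_def)
    have "?f (ss_cycle v) = ennreal (q^2 * p * (w * F (ss_cycle v)))"
      by (simp add: cycle_prob_simps w_def mult.assoc)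
    also have "\<dots> = ennreal (q^2 * p) * (ennreal w * ennreal (F (ss_cycle v)))"
      using nonneg by (simp only: ennreal_mult mult_nonneg_nonneg)
    finally show "?f (ss_cycle v) = ennreal (q^2 * p) * (dyck_weight (p * q) v * ennreal (F (ss_cycle v)))"
      by (simp add: w_def dyck_weight_def)
  qed
  also have "\<dots> = ennreal (q^2 * p) * esum (\<lambda>v. dyck_weight (p * q) v * ennreal (F (ss_cycle v)))"
    by (rule nn_integral_cmult) simp
  finally have ss: "esum (\<lambda>c. ?f c * indicator (range ss_cycle) c) = ennreal (q^2 * p * K)"
    using p_pos q_pos K by (simp add: sum_ss ennreal_mult)
  have "esum ?f = (\<Sum>d\<leftarrow>?special. ?f d) + ennreal (q^2 * p * K)"
    by (subst split) (simp add: nn_integral_add nn_integral_cmult ss)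
  then show ?thesis
    using p_pos q_pos F K gamma_nonneg gamma_le_1
    by (simp add: cycle_prob_simps ennreal_plus[symmetric] add.assoc del: ennreal_plus)
qed

lemma cycle_prob_sum_1: "esum (\<lambda>c. ennreal (cycle_prob p q \<gamma> c)) = 1"
proof -
  have "esum (\<lambda>v. dyck_weight (p * q) v * ennreal 1) = ennreal (1 / p)"
    using dyck_gf by simp
  from esum_cycle_prob[of "\<lambda>_. 1", OF _ _ this]
  have "esum (\<lambda>c. ennreal (cycle_prob p q \<gamma> c)) =
      ennreal (p + p * q^2 + \<gamma> * p^2 * q + (1 - \<gamma>) * p^2 * q + q^2 * p * (1 / p))"
    using p_pos by simp
  also have "p + p * q^2 + \<gamma> * p^2 * q + (1 - \<gamma>) * p^2 * q + q^2 * p * (1 / p) = p + p * q^2 + p^2 * q + q^2"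
    using p_pos by (simp add: field_simps power2_eq_square)
  also have "\<dots> = 1"
    using p_plus_q by (simp add: algebra_simps power2_eq_square flip: eq_diff_eq)
  finally show ?thesis by simp
qed

abbreviation M :: "cycle measure" where
  "M \<equiv> measure_pmf (cycle_pmf p q \<gamma>)"

lemma pmf_cycle_pmf: "pmf (cycle_pmf p q \<gamma>) c = cycle_prob p q \<gamma> c"
  unfolding cycle_pmf_def by (rule pmf_embed_pmf[OF cycle_prob_nonneg cycle_prob_sum_1])

lemma regular_cycle_if_in_set_pmf: "c \<in> set_pmf (cycle_pmf p q \<gamma>) \<Longrightarrow> regular_cycle c"
  using cycle_prob_irregular[of c p q \<gamma>] by (auto simp: set_pmf_eq pmf_cycle_pmf)

lemma nn_integral_cycle_pmf:
  assumes "\<And>c. 0 \<le> F c" "0 \<le> K"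
    and "esum (\<lambda>v. dyck_weight (p * q) v * ennreal (F (ss_cycle v))) = ennreal K"
  shows "(\<integral>\<^sup>+c. ennreal (F c) \<partial>M) =
    ennreal (p * F cycle_H + p * q^2 * F cycle_SHS + \<gamma> * p^2 * q * F cycle_SHH_on_S
      + (1 - \<gamma>) * p^2 * q * F cycle_SHH_on_H + q^2 * p * K)"
  using esum_cycle_prob[OF assms] cycle_prob_nonneg assms(1)
  by (simp add: nn_integral_measure_pmf pmf_cycle_pmf ennreal_mult)

end

section \<open>Blocks of a cycle\<close>

lemma blocks_special_cycles:
  "blocks cycle_H = [Blk False None True 0 1]"
  "blocks cycle_SHS = [Blk True None True 1 1, Blk False None False 1 1, Blk True (Some 0) True 2 2]"
  "blocks cycle_SHH_on_S = [Blk True None True 1 1, Blk False None False 1 1, Blk False (Some 0) True 2 2]"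
  "blocks cycle_SHH_on_H = [Blk True None False 1 1, Blk False None True 1 1, Blk False (Some 1) True 2 2]"
  by (simp_all add: blocks_def prev_same_def height_gen_def)

definition S_before :: "bool list \<Rightarrow> nat \<Rightarrow> nat" where
  "S_before w j = card {t. t < j \<and> w ! t}"

definition ss_uncle :: "bool list \<Rightarrow> nat" where
  "ss_uncle v = S_run v + 2"

lemma blocks_ss_cycle:
  "blocks (ss_cycle v) = map (\<lambda>i. Blk (ss_word v ! i) (prev_same (ss_word v) i) (ss_word v ! i)
     (if ss_word v ! i then length (ss_word v) - 1 else i) (height_gen (ss_word v) i)) [0..<length (ss_word v)]"
proof -
  have "ss_word v \<noteq> [True, False, True]" "ss_word v \<noteq> [True, False, False]" "ss_word v \<noteq> [False]"
    by (auto simp: ss_word_def)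
  then show ?thesis by (simp add: blocks_def ss_cycle_def)
qed

lemma length_blocks_ss_cycle: "length (blocks (ss_cycle v)) = length (ss_word v)"
  by (simp add: blocks_ss_cycle)

lemma nth_blocks_ss_cycle:
  "j < length (ss_word v) \<Longrightarrow> blocks (ss_cycle v) ! j = Blk (ss_word v ! j) (prev_same (ss_word v) j)
     (ss_word v ! j) (if ss_word v ! j then length (ss_word v) - 1 else j) (height_gen (ss_word v) j)"
  by (simp add: blocks_ss_cycle del: upt_Suc)

lemma height_gen_S: "j < length w \<Longrightarrow> w ! j \<Longrightarrow> height_gen w j = 1 + S_before w j"
proof -
  assume j: "j < length w" "w ! j"
  have "{i. i < length (take j w) \<and> take j w ! i} = {t. t < j \<and> w ! t}"
    using j by auto
  then show ?thesis using j by (simp add: height_gen_def S_before_def length_filter_conv_card)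
qed

lemma ss_word_before_uncle: "t < ss_uncle v \<Longrightarrow> ss_word v ! t"
proof -
  assume t: "t < ss_uncle v"
  show ?thesis
  proof (cases "t < 2")
    case True
    then show ?thesis by (auto simp: ss_word_def less_2_cases_iff)
  next
    case False
    then obtain k where k: "t = Suc (Suc k)" by (metis add_2_eq_Suc le_Suc_ex not_less)
    then have "k < S_run v" using t by (simp add: ss_uncle_def)
    then show ?thesis using S_run_le_length[of v] by (simp add: k ss_word_def nth_append nth_less_S_run)
  qed
qed

lemma ss_word_at_uncle: "\<not> ss_word v ! ss_uncle v"
proof (cases "S_run v < length v")
  case True
  then show ?thesis by (simp add: ss_uncle_def ss_word_def nth_append nth_S_run)
next
  case False
  then have "S_run v = length v" using S_run_le_length[of v] by simp
  then show ?thesis by (simp add: ss_uncle_def ss_word_def)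
qed

lemma two_le_ss_uncle: "2 \<le> ss_uncle v"
  by (simp add: ss_uncle_def)

lemma ss_uncle_less: "ss_uncle v < length (ss_word v)"
  using S_run_le_length[of v] by (simp add: ss_uncle_def length_ss_word)

lemma is_uncle_ss_cycle: "is_uncle (ss_cycle v) j \<longleftrightarrow> j = ss_uncle v"
proof
  assume "j = ss_uncle v"
  moreover have "prev_same (ss_word v) (ss_uncle v) = None"
    unfolding prev_same_def using ss_word_before_uncle ss_word_at_uncle by (metis (full_types))
  ultimately show "is_uncle (ss_cycle v) j"
    unfolding is_uncle_def using ss_uncle_less ss_word_at_uncle
    by (simp add: length_blocks_ss_cycle nth_blocks_ss_cycle)
next
  assume u: "is_uncle (ss_cycle v) j"
  then have j: "j < length (ss_word v)" "\<not> ss_word v ! j"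
    unfolding is_uncle_def by (auto simp: length_blocks_ss_cycle nth_blocks_ss_cycle)
  have "\<not> j < ss_uncle v" using ss_word_before_uncle j by blast
  moreover have "\<not> ss_uncle v < j"
  proof
    assume "ss_uncle v < j"
    then have ex: "\<exists>t<j. ss_word v ! t = ss_word v ! j" using ss_word_at_uncle j by auto
    define t where "t = (GREATEST t. t < j \<and> ss_word v ! t = ss_word v ! j)"
    have "t < j \<and> ss_word v ! t = ss_word v ! j" unfolding t_def
      by (rule GreatestI_ex_nat[where b=j]) (use ex in auto)
    then have "\<not> off (blocks (ss_cycle v) ! t)" using j by (simp add: nth_blocks_ss_cycle)
    moreover have "par (blocks (ss_cycle v) ! j) = Some t"
      using ex j unfolding t_def by (simp add: nth_blocks_ss_cycle prev_same_def)
    ultimately show False using u unfolding is_uncle_def by simp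
  qed
  ultimately show "j = ss_uncle v" by simp
qed

lemma ss_uncle_block:
  "hgt (blocks (ss_cycle v) ! ss_uncle v) = 1" "pub (blocks (ss_cycle v) ! ss_uncle v) = ss_uncle v"
  "att (blocks (ss_cycle v) ! ss_uncle v) = False"
proof -
  have "filter (\<lambda>b. b = False) (take (ss_uncle v) (ss_word v)) = []"
    using ss_word_before_uncle by (auto simp: filter_empty_conv in_set_conv_nth)
  then show "hgt (blocks (ss_cycle v) ! ss_uncle v) = 1"
    using ss_uncle_less ss_word_at_uncle by (simp add: nth_blocks_ss_cycle height_gen_def)
  show "pub (blocks (ss_cycle v) ! ss_uncle v) = ss_uncle v" "att (blocks (ss_cycle v) ! ss_uncle v) = False"
    using ss_uncle_less ss_word_at_uncle by (simp_all add: nth_blocks_ss_cycle)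
qed

lemma ss_cycle_block:
  assumes "j < length (ss_word v)"
  shows "off (blocks (ss_cycle v) ! j) = ss_word v ! j" "att (blocks (ss_cycle v) ! j) = ss_word v ! j"
    "ss_word v ! j \<Longrightarrow> hgt (blocks (ss_cycle v) ! j) = 1 + S_before (ss_word v) j"
  using assms by (simp_all add: nth_blocks_ss_cycle height_gen_S)

lemma offlen_ss_cycle: "offlen (ss_cycle v) = 2 + length (filter id v)"
proof -
  have "offlen (ss_cycle v) = length (filter ((!) (ss_word v)) [0..<length (ss_word v)])"
    unfolding offlen_def blocks_ss_cycle by (simp add: filter_map comp_def)
  also have "\<dots> = length (filter id (map ((!) (ss_word v)) [0..<length (ss_word v)]))"
    by (simp add: filter_map comp_def)
  also have "\<dots> = length (filter id (ss_word v))"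
    by (simp only: map_nth)
  finally show ?thesis by (simp add: ss_word_def)
qed

lemma S_before_length: "S_before w (length w) = length (filter id w)"
  by (simp add: S_before_def length_filter_conv_card)

lemma offlen_ss_cycle_S_before: "offlen (ss_cycle v) = S_before (ss_word v) (length (ss_word v))"
  unfolding S_before_length offlen_ss_cycle by (simp add: ss_word_def)

lemma S_before_after_uncle: "ss_uncle v < j \<Longrightarrow> ss_uncle v \<le> S_before (ss_word v) j"
proof -
  assume "ss_uncle v < j"
  then have "card {..<ss_uncle v} \<le> card {t. t < j \<and> ss_word v ! t}"
    using ss_word_before_uncle by (intro card_mono) auto
  then show ?thesis by (simp add: S_before_def)
qed

lemma uncle_le_offlen_ss_cycle: "ss_uncle v \<le> offlen (ss_cycle v)"
  using S_before_after_uncle[OF ss_uncle_less, of v] by (simp add: offlen_ss_cycle_S_before)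

lemma first_S_after_uncle:
  assumes "ss_uncle v < offlen (ss_cycle v)"
  obtains j where "ss_uncle v < j" "j < length (ss_word v)" "ss_word v ! j" "S_before (ss_word v) j = ss_uncle v"
proof -
  let ?w = "ss_word v" and ?i = "ss_uncle v"
  define P where "P j \<longleftrightarrow> ?i < j \<and> j < length ?w \<and> ?w ! j" for j
  have "\<exists>j. P j"
  proof (rule ccontr)
    assume "\<nexists>j. P j"
    have "{t. t < length ?w \<and> ?w ! t} \<subseteq> {..<?i}"
    proof
      fix t assume t: "t \<in> {t. t < length ?w \<and> ?w ! t}"
      then have "t \<noteq> ?i" "\<not> P t" using ss_word_at_uncle \<open>\<nexists>j. P j\<close> by auto
      then show "t \<in> {..<?i}" using t by (auto simp: P_def)
    qed
    then have "S_before ?w (length ?w) \<le> ?i"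
      unfolding S_before_def using card_mono[of "{..<?i}"] by fastforce
    then show False using assms by (simp add: offlen_ss_cycle_S_before)
  qed
  define j where "j = (LEAST j. P j)"
  have Pj: "P j" unfolding j_def by (rule LeastI_ex) fact
  have "{t. t < j \<and> ?w ! t} = {..<?i}"
  proof (intro equalityI subsetI)
    fix t assume t: "t \<in> {t. t < j \<and> ?w ! t}"
    have "\<not> P t" "t \<noteq> ?i" using t ss_word_at_uncle unfolding j_def using not_less_Least by auto
    then show "t \<in> {..<?i}" using t Pj by (auto simp: P_def)
  qed (use Pj ss_word_before_uncle in \<open>auto simp: P_def\<close>)
  then have "S_before ?w j = ?i" by (simp add: S_before_def)
  then show ?thesis using that Pj by (auto simp: P_def)
qed

lemma no_S_after_uncle:
  assumes "offlen (ss_cycle v) = ss_uncle v" "ss_uncle v < j" "j < length (ss_word v)"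
  shows "\<not> ss_word v ! j"
proof
  assume "ss_word v ! j"
  then have "insert j {..<ss_uncle v} \<subseteq> {t. t < length (ss_word v) \<and> ss_word v ! t}"
    using assms ss_word_before_uncle ss_uncle_less by auto
  then have "card (insert j {..<ss_uncle v}) \<le> S_before (ss_word v) (length (ss_word v))"
    unfolding S_before_def by (rule card_mono[rotated]) auto
  then show False using assms by (simp add: offlen_ss_cycle_S_before)
qed

section \<open>Referral of the uncles of the first cycle\<close>

abbreviation nephew :: "cycle stream \<Rightarrow> nat \<Rightarrow> nat \<Rightarrow> blk" where
  "nephew xs k j \<equiv> blocks (xs !! k) ! j"

abbreviation nephew_hgt :: "cycle stream \<Rightarrow> nat \<Rightarrow> nat \<Rightarrow> nat" where
  "nephew_hgt xs k j \<equiv> hoff xs k + hgt (nephew xs k j)"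

lemma hoff_0 [simp]: "hoff xs 0 = 0" and toff_0 [simp]: "toff xs 0 = 0"
  and hoff_1: "hoff xs 1 = offlen (xs !! 0)" and toff_1: "toff xs 1 = length (fst (xs !! 0))"
  by (simp_all add: hoff_def toff_def)

lemma hoff_shift_stake: "k \<le> n \<Longrightarrow> hoff (stake n xs @- ys) k = hoff xs k"
  by (auto simp: hoff_def intro!: sum.cong)

lemma toff_shift_stake: "k \<le> n \<Longrightarrow> toff (stake n xs @- ys) k = toff xs k"
  by (auto simp: toff_def intro!: sum.cong)

lemma measurable_stake_determined:
  fixes f :: "'a::countable stream \<Rightarrow> 'b"
  assumes "\<And>xs ys. f (stake n xs @- ys) = f xs"
  shows "f \<in> measurable (stream_space (count_space UNIV)) (count_space UNIV)"
proof -
  have "(\<lambda>xs. f (stake n xs @- sconst undefined)) \<in> measurable (stream_space (count_space UNIV)) (count_space UNIV)"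
    by (rule measurable_compose[OF measurable_stake]) simp
  then show ?thesis using assms by simp
qed

lemma measurable_can_refer [measurable]:
  "Measurable.pred (stream_space (count_space UNIV)) (\<lambda>xs. can_refer n1 xs i k j)"
  by (rule measurable_stake_determined[where n = "Suc k"])
    (simp add: can_refer_def Let_def hoff_shift_stake toff_shift_stake del: stake.simps snth.simps)

lemma measurable_nephew_hgt [measurable]:
  "(\<lambda>xs. nephew_hgt xs k j) \<in> measurable (stream_space (count_space UNIV)) (count_space UNIV)"
  by (rule measurable_stake_determined[where n = "Suc k"]) (simp add: hoff_shift_stake del: stake.simps)

lemma measurable_nephew_att [measurable]:
  "Measurable.pred (stream_space (count_space UNIV)) (\<lambda>xs. att (nephew xs k j))"
  by (rule measurable_stake_determined[where n = "Suc k"]) (simp del: stake.simps)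

lemma referred_iff_can_refer: "referred n1 xs i \<longleftrightarrow> (\<exists>k j. can_refer n1 xs i k j)"
  unfolding referred_def ref_heights_def by auto

lemma measurable_referred [measurable]:
  "Measurable.pred (stream_space (count_space UNIV)) (\<lambda>xs. referred n1 xs i)"
  unfolding referred_iff_can_refer by measurable

lemma measurable_lowest_ref_height [measurable]:
  "(\<lambda>xs. LEAST h. h \<in> ref_heights n1 xs i) \<in> measurable (stream_space (count_space UNIV)) (count_space UNIV)"
  unfolding ref_heights_def mem_Collect_eq by measurable

lemma pred_eq_count_space [measurable (raw)]:
  fixes f g :: "'a \<Rightarrow> 'b::countable"
  assumes [measurable]: "f \<in> measurable M (count_space UNIV)" "g \<in> measurable M (count_space UNIV)"
  shows "Measurable.pred M (\<lambda>x. f x = g x)"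
proof -
  have "Measurable.pred M (\<lambda>x. \<exists>h. f x = h \<and> g x = h)" by measurable
  then show ?thesis by simp
qed

lemma measurable_referred_by [measurable]:
  "Measurable.pred (stream_space (count_space UNIV)) (\<lambda>xs. referred_by a n1 xs i)"
  unfolding referred_by_def by (cases a) (simp_all, measurable)

lemma measurable_card_uncles:
  assumes [measurable]: "\<And>i. Measurable.pred (stream_space (count_space UNIV)) (P i)"
  shows "(\<lambda>xs. real (card {i. is_uncle (xs !! 0) i \<and> P i xs})) \<in> borel_measurable (stream_space (count_space UNIV))"
proof -
  have card_eq: "card {i. is_uncle c i \<and> P i xs} = (\<Sum>i<length (blocks c). of_bool (is_uncle c i \<and> P i xs))"
    for c xs
  proof -
    have "{i. is_uncle c i \<and> P i xs} = {i \<in> {..<length (blocks c)}. is_uncle c i \<and> P i xs}"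
      by (auto simp: is_uncle_def)
    then show ?thesis by (simp add: sum.If_cases) (intro arg_cong[where f = card], auto)
  qed
  have "(\<lambda>xs. (\<lambda>c xs. real (card {i. is_uncle c i \<and> P i xs})) (xs !! 0) xs)
      \<in> borel_measurable (stream_space (count_space UNIV))"
    by (rule measurable_compose_countable[where g = "\<lambda>xs. xs !! 0"]) (unfold card_eq, measurable)
  then show ?thesis by simp
qed

lemma measurable_U:
  "U n1 \<in> borel_measurable (stream_space (measure_pmf N))"
  "U_h n1 \<in> borel_measurable (stream_space (measure_pmf N))"
  "U_s n1 \<in> borel_measurable (stream_space (measure_pmf N))"
proof -
  have sets: "borel_measurable (stream_space (measure_pmf N)) = borel_measurable (stream_space (count_space UNIV))"
    by (intro measurable_cong_sets sets_stream_space_cong) simp_all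
  show "U n1 \<in> borel_measurable (stream_space (measure_pmf N))"
    unfolding sets U_def by (rule measurable_card_uncles) measurable
  show "U_h n1 \<in> borel_measurable (stream_space (measure_pmf N))"
    unfolding sets U_h_def by (rule measurable_card_uncles) measurable
  show "U_s n1 \<in> borel_measurable (stream_space (measure_pmf N))"
    unfolding sets U_s_def by (rule measurable_card_uncles) measurable
qed

lemma referred_by_lowest_nephew:
  assumes "can_refer n1 xs i k0 j0" "nephew_hgt xs k0 j0 = h0" "att (nephew xs k0 j0) = a0"
    and lowest: "\<And>k j. can_refer n1 xs i k j \<Longrightarrow> h0 \<le> nephew_hgt xs k j \<and>
            (nephew_hgt xs k j = h0 \<longrightarrow> att (nephew xs k j) = a0)"
  shows "referred n1 xs i" "referred_by a n1 xs i \<longleftrightarrow> a = a0"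
proof -
  have h0: "h0 \<in> ref_heights n1 xs i" unfolding ref_heights_def using assms(1,2) by blast
  then show referred: "referred n1 xs i" unfolding referred_def by blast
  have "(LEAST h. h \<in> ref_heights n1 xs i) = h0"
    by (rule Least_equality[where P = "\<lambda>h. h \<in> ref_heights n1 xs i", OF h0]) (use lowest in \<open>auto simp: ref_heights_def\<close>)
  then show "referred_by a n1 xs i \<longleftrightarrow> a = a0"
    unfolding referred_by_def using referred assms by blast
qed

lemma not_referred:
  assumes "\<And>k j. \<not> can_refer n1 xs i k j"
  shows "\<not> referred n1 xs i" "\<not> referred_by a n1 xs i"
  using assms unfolding referred_by_def referred_def ref_heights_def by auto

lemma card_single_uncle:
  assumes "\<And>j. is_uncle c j \<longleftrightarrow> j = i"
  shows "real (card {j. is_uncle c j \<and> P j}) = of_bool (P i)"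
proof -
  have "{j. is_uncle c j \<and> P j} = (if P i then {i} else {})" using assms by auto
  then show ?thesis by simp
qed

lemma hgt_pos: "j < length (blocks c) \<Longrightarrow> 1 \<le> hgt (blocks c ! j)"
  by (auto simp: blocks_def height_gen_def nth_Cons' split: prod.splits)

lemma nephew_hgt_later_cycle:
  assumes "1 \<le> k" "j < length (blocks (xs !! k))"
  shows "offlen (xs !! 0) + 1 \<le> nephew_hgt xs k j"
proof -
  have "(\<Sum>t\<in>{0}. offlen (xs !! t)) \<le> hoff xs k"
    unfolding hoff_def using assms(1) by (intro sum_mono2) auto
  then show ?thesis using hgt_pos[OF assms(2)] by simp
qed

lemma nephew_hgt_after_two_cycles:
  assumes "2 \<le> k" "j < length (blocks (xs !! k))"
  shows "offlen (xs !! 0) + offlen (xs !! 1) + 1 \<le> nephew_hgt xs k j"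
proof -
  have "(\<Sum>t\<in>{0, 1}. offlen (xs !! t)) \<le> hoff xs k"
    unfolding hoff_def using assms(1) by (intro sum_mono2) auto
  then show ?thesis using hgt_pos[OF assms(2)] by simp
qed

lemma referred_in_three_block_cycle:
  assumes x: "xs !! 0 = x" and b: "blocks x = [b0, b1, Blk A pa True 2 2]" "hgt b0 = 1" "hgt b1 = 1"
    "off b0 \<or> off b1" and i: "i < 2" "pub (blocks x ! i) < 2" and "1 \<le> n1"
  shows "referred n1 xs i" "referred_by a n1 xs i \<longleftrightarrow> a = A"
proof -
  have hi: "hgt (blocks x ! i) = 1" using i b by (cases i) auto
  have "offlen x \<ge> 2" using b(1,4) by (auto simp: offlen_def)
  have "can_refer n1 xs i 0 2"
    unfolding can_refer_def Let_def using x b hi i \<open>1 \<le> n1\<close> by simp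
  moreover have "2 \<le> nephew_hgt xs k j \<and> (nephew_hgt xs k j = 2 \<longrightarrow> att (nephew xs k j) = A)"
    if c: "can_refer n1 xs i k j" for k j
  proof (cases k)
    case 0
    then have "j < 3" "1 < hgt (blocks x ! j)" using c x hi b(1) by (auto simp: can_refer_def Let_def)
    then have "j = 2" using b by (auto simp: less_Suc_eq numeral_3_eq_3)
    then show ?thesis using 0 x b by simp
  next
    case (Suc k')
    then have "offlen x + 1 \<le> nephew_hgt xs k j"
      using nephew_hgt_later_cycle[of k j xs] c x by (simp add: can_refer_def Let_def)
    then show ?thesis using \<open>offlen x \<ge> 2\<close> by simp
  qed
  ultimately show "referred n1 xs i" "referred_by a n1 xs i \<longleftrightarrow> a = A"
    using referred_by_lowest_nephew[of n1 xs i 0 2 2 A] x b by simp_all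
qed

definition honest_first :: "cycle \<Rightarrow> bool" where
  "honest_first c \<longleftrightarrow> c = cycle_H \<or> c = cycle_SHH_on_H"

lemma official_block_at_height_1:
  assumes "regular_cycle y"
  shows "\<exists>j<length (blocks y). off (blocks y ! j) \<and> hgt (blocks y ! j) = 1"
    "\<And>j. j < length (blocks y) \<Longrightarrow> off (blocks y ! j) \<Longrightarrow> hgt (blocks y ! j) = 1 \<Longrightarrow>
       att (blocks y ! j) = (\<not> honest_first y)"
    "1 \<le> offlen y"
proof -
  have "(\<exists>j<length (blocks y). off (blocks y ! j) \<and> hgt (blocks y ! j) = 1) \<and>
    (\<forall>j<length (blocks y). off (blocks y ! j) \<and> hgt (blocks y ! j) = 1 \<longrightarrow> att (blocks y ! j) = (\<not> honest_first y)) \<and>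
    1 \<le> offlen y"
    using assms unfolding regular_cycle_def
  proof (elim disjE exE conjE)
    fix v assume y: "y = ss_cycle v"
    have "0 < length (ss_word v)" "ss_word v ! 0" "S_before (ss_word v) 0 = 0"
      by (simp_all add: ss_word_def S_before_def)
    then show ?thesis
      using y ss_cycle_block[of _ v] uncle_le_offlen_ss_cycle[of v] two_le_ss_uncle[of v]
      by (auto simp: honest_first_def length_blocks_ss_cycle intro!: exI[of _ 0])
  qed (auto simp: blocks_special_cycles honest_first_def offlen_def less_Suc_eq)
  then show "\<exists>j<length (blocks y). off (blocks y ! j) \<and> hgt (blocks y ! j) = 1"
    "\<And>j. j < length (blocks y) \<Longrightarrow> off (blocks y ! j) \<Longrightarrow> hgt (blocks y ! j) = 1 \<Longrightarrow>
       att (blocks y ! j) = (\<not> honest_first y)"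
    "1 \<le> offlen y" by auto
qed

lemma can_refer_ss_uncle:
  assumes "xs !! 0 = ss_cycle v"
  shows "can_refer n1 xs (ss_uncle v) k j \<longleftrightarrow> j < length (blocks (xs !! k)) \<and> off (nephew xs k j) \<and>
      1 < nephew_hgt xs k j \<and> nephew_hgt xs k j \<le> 1 + n1 \<and> ss_uncle v < toff xs k + j"
  unfolding can_refer_def Let_def assms using ss_uncle_block[of v] by auto

lemma nephew_in_ss_cycle:
  assumes x: "xs !! 0 = ss_cycle v" and c: "can_refer n1 xs (ss_uncle v) 0 j"
  shows "ss_uncle v < j" "j < length (ss_word v)" "ss_word v ! j" "att (nephew xs 0 j)"
    "ss_uncle v + 1 \<le> nephew_hgt xs 0 j"
proof -
  have "j < length (ss_word v)" "off (blocks (ss_cycle v) ! j)" "ss_uncle v < j"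
    using c unfolding can_refer_ss_uncle[OF x] x by (auto simp: length_blocks_ss_cycle)
  then show j: "ss_uncle v < j" "j < length (ss_word v)" "ss_word v ! j"
    using ss_cycle_block(1) by auto
  then show "att (nephew xs 0 j)" "ss_uncle v + 1 \<le> nephew_hgt xs 0 j"
    unfolding x using ss_cycle_block(2,3) S_before_after_uncle by simp_all
qed

lemma ss_uncle_unreferable:
  assumes x: "xs !! 0 = ss_cycle v" and "n1 < ss_uncle v"
  shows "\<not> can_refer n1 xs (ss_uncle v) k j"
proof
  assume c: "can_refer n1 xs (ss_uncle v) k j"
  then have upper: "nephew_hgt xs k j \<le> 1 + n1" "j < length (blocks (xs !! k))"
    unfolding can_refer_ss_uncle[OF x] by simp_all
  show False
  proof (cases k)
    case 0
    with c have "can_refer n1 xs (ss_uncle v) 0 j" by simp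
    then show False using nephew_in_ss_cycle(5)[OF x] upper 0 \<open>n1 < ss_uncle v\<close> by fastforce
  next
    case (Suc k')
    then show False using nephew_hgt_later_cycle[of k j xs] upper \<open>n1 < ss_uncle v\<close> x
        uncle_le_offlen_ss_cycle[of v] by simp
  qed
qed

lemma ss_uncle_referred_by_attacker:
  assumes x: "xs !! 0 = ss_cycle v" and "ss_uncle v \<le> n1" and "ss_uncle v < offlen (ss_cycle v)"
  shows "referred n1 xs (ss_uncle v)" "referred_by a n1 xs (ss_uncle v) \<longleftrightarrow> a"
proof -
  obtain j0 where j0: "ss_uncle v < j0" "j0 < length (ss_word v)" "ss_word v ! j0"
    "S_before (ss_word v) j0 = ss_uncle v"
    using first_S_after_uncle[OF assms(3)] by blast
  have "can_refer n1 xs (ss_uncle v) 0 j0"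
    unfolding can_refer_ss_uncle[OF x] x
    using j0 assms two_le_ss_uncle[of v] ss_cycle_block[OF j0(2)] by (simp add: length_blocks_ss_cycle)
  moreover have "ss_uncle v + 1 \<le> nephew_hgt xs k j \<and> (nephew_hgt xs k j = ss_uncle v + 1 \<longrightarrow> att (nephew xs k j))"
    if c: "can_refer n1 xs (ss_uncle v) k j" for k j
  proof (cases k)
    case 0
    with c have "can_refer n1 xs (ss_uncle v) 0 j" by simp
    then show ?thesis using nephew_in_ss_cycle(4,5)[OF x] 0 by simp
  next
    case (Suc k')
    moreover have "j < length (blocks (xs !! k))" using c unfolding can_refer_ss_uncle[OF x] by simp
    ultimately show ?thesis using nephew_hgt_later_cycle[of k j xs] assms(3) x by simp
  qed
  ultimately show "referred n1 xs (ss_uncle v)" "referred_by a n1 xs (ss_uncle v) \<longleftrightarrow> a"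
    using referred_by_lowest_nephew[of n1 xs "ss_uncle v" 0 j0 "ss_uncle v + 1" True] x j0 ss_cycle_block[OF j0(2)]
    by simp_all
qed

text \<open>Without attacker blocks after the uncle, the lowest possible nephew is the official
  block at height 1 of the next cycle.\<close>
lemma ss_uncle_referred_in_next_cycle:
  assumes x: "xs !! 0 = ss_cycle v" and y: "xs !! 1 = y" "regular_cycle y"
    and "ss_uncle v \<le> n1" and top: "offlen (ss_cycle v) = ss_uncle v"
  shows "referred n1 xs (ss_uncle v)" "referred_by a n1 xs (ss_uncle v) \<longleftrightarrow> a = (\<not> honest_first y)"
proof -
  obtain j0 where j0: "j0 < length (blocks y)" "off (blocks y ! j0)" "hgt (blocks y ! j0) = 1"
    using official_block_at_height_1(1)[OF y(2)] by blast
  have hoff1: "hoff xs 1 = ss_uncle v" unfolding hoff_1 x by (rule top)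
  have "can_refer n1 xs (ss_uncle v) 1 j0"
    unfolding can_refer_ss_uncle[OF x] y(1) hoff1 toff_1 x fst_ss_cycle
    using j0 assms two_le_ss_uncle[of v] ss_uncle_less[of v] by simp
  moreover have "ss_uncle v + 1 \<le> nephew_hgt xs k j \<and>
      (nephew_hgt xs k j = ss_uncle v + 1 \<longrightarrow> att (nephew xs k j) = (\<not> honest_first y))"
    if c: "can_refer n1 xs (ss_uncle v) k j" for k j
  proof -
    have j: "j < length (blocks (xs !! k))" "off (nephew xs k j)"
      using c unfolding can_refer_ss_uncle[OF x] by simp_all
    consider "k = 0" | "k = 1" | "2 \<le> k" by linarith
    then show ?thesis
    proof cases
      case 1
      then show ?thesis using nephew_in_ss_cycle(1-3)[OF x] c no_S_after_uncle[OF top] by blast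
    next
      case 2
      then show ?thesis using j y official_block_at_height_1(2)[OF y(2)] hgt_pos[of j y] hoff1 by auto
    next
      case 3
      then show ?thesis using nephew_hgt_after_two_cycles[OF _ j(1)] x y top
          official_block_at_height_1(3)[OF y(2)] by fastforce
    qed
  qed
  ultimately show "referred n1 xs (ss_uncle v)" "referred_by a n1 xs (ss_uncle v) \<longleftrightarrow> a = (\<not> honest_first y)"
    using referred_by_lowest_nephew[of n1 xs "ss_uncle v" 1 j0 "ss_uncle v + 1" "\<not> honest_first y"]
      y j0 hoff1 official_block_at_height_1(2)[OF y(2) j0] by simp_all
qed

section \<open>The uncle counts as functions of the first two cycles\<close>

definition U_cycle :: "nat \<Rightarrow> cycle \<Rightarrow> real" where
  "U_cycle n1 c = of_bool (c \<in> {cycle_SHS, cycle_SHH_on_S, cycle_SHH_on_H} \<or> (\<exists>v. c = ss_cycle v \<and> ss_uncle v \<le> n1))"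

definition U_h_cycles :: "nat \<Rightarrow> cycle \<Rightarrow> cycle \<Rightarrow> real" where
  "U_h_cycles n1 c d = of_bool (c \<in> {cycle_SHH_on_S, cycle_SHH_on_H} \<or>
     c \<in> ss_cycle ` mountain ` {..<n1 - 1} \<and> honest_first d)"

lemma is_uncle_special_cycles:
  "\<not> is_uncle cycle_H j" "is_uncle cycle_SHS j \<longleftrightarrow> j = 1"
  "is_uncle cycle_SHH_on_S j \<longleftrightarrow> j = 1" "is_uncle cycle_SHH_on_H j \<longleftrightarrow> j = 0"
  unfolding is_uncle_def blocks_special_cycles
  by (cases j; simp; cases "j - 1"; simp; cases "j - 2"; simp)+

lemma U_values_special:
  assumes x: "xs !! 0 = x" and "x \<in> {cycle_SHS, cycle_SHH_on_S, cycle_SHH_on_H}" and "1 \<le> n1"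
  shows "U n1 xs = 1" "U_h n1 xs = of_bool (x \<noteq> cycle_SHS)" "U_s n1 xs = of_bool (x = cycle_SHS)"
proof -
  obtain i where uncle: "\<And>j. is_uncle x j \<longleftrightarrow> j = i"
    and "referred n1 xs i" "\<And>a. referred_by a n1 xs i \<longleftrightarrow> a = (x = cycle_SHS)"
  proof -
    consider "x = cycle_SHS" | "x = cycle_SHH_on_S" | "x = cycle_SHH_on_H" using assms(2) by blast
    then show ?thesis
    proof cases
      case 1
      have "referred n1 xs 1" "referred_by a n1 xs 1 \<longleftrightarrow> a" for a
        using referred_in_three_block_cycle[OF x[unfolded 1] blocks_special_cycles(2), where i = 1]
          \<open>1 \<le> n1\<close> by (simp_all add: blocks_special_cycles)
      then show ?thesis by (intro that[of 1]) (simp_all add: 1 is_uncle_special_cycles)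
    next
      case 2
      have "referred n1 xs 1" "referred_by a n1 xs 1 \<longleftrightarrow> \<not> a" for a
        using referred_in_three_block_cycle[OF x[unfolded 2] blocks_special_cycles(3), where i = 1]
          \<open>1 \<le> n1\<close> by (simp_all add: blocks_special_cycles)
      then show ?thesis by (intro that[of 1]) (simp_all add: 2 is_uncle_special_cycles)
    next
      case 3
      have "referred n1 xs 0" "referred_by a n1 xs 0 \<longleftrightarrow> \<not> a" for a
        using referred_in_three_block_cycle[OF x[unfolded 3] blocks_special_cycles(4), where i = 0]
          \<open>1 \<le> n1\<close> by (simp_all add: blocks_special_cycles)
      then show ?thesis by (intro that[of 0]) (simp_all add: 3 is_uncle_special_cycles)
    qed
  qed
  then show "U n1 xs = 1" "U_h n1 xs = of_bool (x \<noteq> cycle_SHS)" "U_s n1 xs = of_bool (x = cycle_SHS)"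
    unfolding U_def U_h_def U_s_def x card_single_uncle[OF uncle] by simp_all
qed

lemma offlen_ss_cycle_eq_uncle_iff:
  assumes "dyck v"
  shows "offlen (ss_cycle v) = ss_uncle v \<longleftrightarrow> v \<in> range mountain"
  using dyck_all_S_first_iff_mountain[OF assms] by (simp add: offlen_ss_cycle ss_uncle_def)

lemma U_values_ss_cycle:
  assumes x: "xs !! 0 = ss_cycle v" and "dyck v" and y: "xs !! 1 = y" "regular_cycle y"
  shows "U n1 xs = of_bool (ss_uncle v \<le> n1)"
    "U_h n1 xs = of_bool (ss_uncle v \<le> n1 \<and> v \<in> range mountain \<and> honest_first y)"
    "U_s n1 xs = of_bool (ss_uncle v \<le> n1 \<and> \<not> (v \<in> range mountain \<and> honest_first y))"
proof -
  have "(referred n1 xs (ss_uncle v) \<longleftrightarrow> ss_uncle v \<le> n1) \<and>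
    (\<forall>a. referred_by a n1 xs (ss_uncle v) \<longleftrightarrow> ss_uncle v \<le> n1 \<and> a = (\<not> (v \<in> range mountain \<and> honest_first y)))"
  proof (cases "ss_uncle v \<le> n1")
    case False
    then show ?thesis using not_referred ss_uncle_unreferable[OF x] by (metis not_le)
  next
    case True
    show ?thesis
    proof (cases "v \<in> range mountain")
      case True
      then have "offlen (ss_cycle v) = ss_uncle v" using offlen_ss_cycle_eq_uncle_iff[OF \<open>dyck v\<close>] by simp
      then show ?thesis using ss_uncle_referred_in_next_cycle[OF x y] \<open>ss_uncle v \<le> n1\<close> True by simp
    next
      case False
      then have "ss_uncle v < offlen (ss_cycle v)"
        using offlen_ss_cycle_eq_uncle_iff[OF \<open>dyck v\<close>] uncle_le_offlen_ss_cycle[of v] by simp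
      then show ?thesis using ss_uncle_referred_by_attacker[OF x] \<open>ss_uncle v \<le> n1\<close> False by simp
    qed
  qed
  then show "U n1 xs = of_bool (ss_uncle v \<le> n1)"
    "U_h n1 xs = of_bool (ss_uncle v \<le> n1 \<and> v \<in> range mountain \<and> honest_first y)"
    "U_s n1 xs = of_bool (ss_uncle v \<le> n1 \<and> \<not> (v \<in> range mountain \<and> honest_first y))"
    unfolding U_def U_h_def U_s_def x card_single_uncle[OF is_uncle_ss_cycle] by auto
qed

lemma U_values:
  assumes x: "regular_cycle x" and y: "regular_cycle y" and "1 \<le> n1"
  shows "U n1 (x ## y ## X) = U_cycle n1 x" "U_h n1 (x ## y ## X) = U_h_cycles n1 x y"
    "U_s n1 (x ## y ## X) = U_cycle n1 x - U_h_cycles n1 x y"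
proof -
  let ?xs = "x ## y ## X"
  have "U n1 ?xs = U_cycle n1 x \<and> U_h n1 ?xs = U_h_cycles n1 x y \<and> U_s n1 ?xs = U_cycle n1 x - U_h_cycles n1 x y"
    using x unfolding regular_cycle_def
  proof (elim disjE exE conjE)
    assume "x \<in> {cycle_H, cycle_SHS, cycle_SHH_on_S, cycle_SHH_on_H}"
    then consider "x = cycle_H" | "x \<in> {cycle_SHS, cycle_SHH_on_S, cycle_SHH_on_H}" by blast
    then show ?thesis
    proof cases
      case 1
      then show ?thesis by (simp add: U_def U_h_def U_s_def U_cycle_def U_h_cycles_def is_uncle_special_cycles image_iff)
    next
      case 2
      then have "U_cycle n1 x = 1" "U_h_cycles n1 x y = of_bool (x \<noteq> cycle_SHS)"
        by (auto simp: U_cycle_def U_h_cycles_def)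
      then show ?thesis using U_values_special[of ?xs x n1] 2 \<open>1 \<le> n1\<close> by (simp add: of_bool_def)
    qed
  next
    fix v assume v: "dyck v" "x = ss_cycle v"
    have "ss_cycle v \<in> ss_cycle ` mountain ` {..<n1 - 1} \<longleftrightarrow> ss_uncle v \<le> n1 \<and> v \<in> range mountain"
      by (auto simp: inj_image_mem_iff[OF inj_ss_cycle] ss_uncle_def S_run_mountain)
    then have "U_cycle n1 x = of_bool (ss_uncle v \<le> n1)"
      "U_h_cycles n1 x y = of_bool (ss_uncle v \<le> n1 \<and> v \<in> range mountain \<and> honest_first y)"
      using v by (simp_all add: U_cycle_def U_h_cycles_def inj_eq[OF inj_ss_cycle])
    then show ?thesis using U_values_ss_cycle[of ?xs v y n1] v y by (simp add: of_bool_def)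
  qed
  then show "U n1 ?xs = U_cycle n1 x" "U_h n1 ?xs = U_h_cycles n1 x y"
    "U_s n1 ?xs = U_cycle n1 x - U_h_cycles n1 x y" by simp_all
qed

section \<open>Expectations\<close>

lemma integral_stream_space_two_heads:
  fixes N :: "'a pmf"
  assumes f: "f \<in> borel_measurable (stream_space (measure_pmf N))" and nonneg: "\<And>xs. 0 \<le> f xs"
    and heads: "\<And>x y X. x \<in> set_pmf N \<Longrightarrow> y \<in> set_pmf N \<Longrightarrow> f (x ## y ## X) = \<phi> x y"
  shows "integral\<^sup>L (stream_space (measure_pmf N)) f =
     enn2real (\<integral>\<^sup>+x. (\<integral>\<^sup>+y. ennreal (\<phi> x y) \<partial>measure_pmf N) \<partial>measure_pmf N)"
proof -
  interpret S: prob_space "stream_space (measure_pmf N)"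
    by (rule prob_space.prob_space_stream_space[OF prob_space_measure_pmf])
  note nn_integral_stream = prob_space.nn_integral_stream_space[OF prob_space_measure_pmf]
  have fm: "(\<lambda>xs. ennreal (f xs)) \<in> borel_measurable (stream_space (measure_pmf N))" using f by simp
  have fx: "(\<lambda>X. ennreal (f (x ## X))) \<in> borel_measurable (stream_space (measure_pmf N))" for x
    by (rule measurable_compose[OF _ fm]) (rule measurable_Stream; simp)
  have "integral\<^sup>L (stream_space (measure_pmf N)) f = enn2real (\<integral>\<^sup>+xs. ennreal (f xs) \<partial>stream_space (measure_pmf N))"
    by (rule integral_eq_nn_integral) (use f nonneg in auto)
  also have "(\<integral>\<^sup>+xs. ennreal (f xs) \<partial>stream_space (measure_pmf N)) =
     (\<integral>\<^sup>+x. (\<integral>\<^sup>+y. (\<integral>\<^sup>+X. ennreal (f (x ## y ## X)) \<partial>stream_space (measure_pmf N)) \<partial>measure_pmf N) \<partial>measure_pmf N)"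
    unfolding nn_integral_stream[OF fm] by (intro nn_integral_cong nn_integral_stream[OF fx])
  also have "\<dots> = (\<integral>\<^sup>+x. (\<integral>\<^sup>+y. ennreal (\<phi> x y) \<partial>measure_pmf N) \<partial>measure_pmf N)"
    using heads S.emeasure_space_1 by (intro nn_integral_cong_AE AE_pmfI) simp_all
  finally show ?thesis .
qed

context attack
begin

lemma nn_integral_honest_first: "(\<integral>\<^sup>+y. ennreal (of_bool (honest_first y)) \<partial>M) = ennreal (p + (1 - \<gamma>) * p^2 * q)"
proof -
  have "esum (\<lambda>v. dyck_weight (p * q) v * ennreal (of_bool (honest_first (ss_cycle v)))) = ennreal 0"
    by (simp add: honest_first_def)
  from nn_integral_cycle_pmf[OF _ _ this] show ?thesis by (simp add: honest_first_def)
qed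

context
  fixes n1 :: nat
  assumes two_le_n1: "2 \<le> n1"
begin

lemma esum_U_cycle_ss_cycle:
  "esum (\<lambda>v. dyck_weight (p * q) v * ennreal (U_cycle n1 (ss_cycle v))) = ennreal (1 / p - q ^ (n1 - 1) / p)"
proof -
  define A where "A = esum (\<lambda>v. dyck_weight (p * q) v * ennreal (U_cycle n1 (ss_cycle v)))"
  have split: "dyck_weight (p * q) v = dyck_weight (p * q) v * ennreal (U_cycle n1 (ss_cycle v)) +
      dyck_weight (p * q) v * indicator {v. take (n1 - 1) v = replicate (n1 - 1) True} v" for v
  proof -
    have "take (n1 - 1) v = replicate (n1 - 1) True \<longleftrightarrow> \<not> ss_uncle v \<le> n1"
      unfolding take_eq_replicate_True_iff ss_uncle_def using two_le_n1 by linarith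
    then show ?thesis by (auto simp: indicator_def U_cycle_def inj_eq[OF inj_ss_cycle])
  qed
  have "ennreal (1 / p) = esum (\<lambda>v. dyck_weight (p * q) v * ennreal (U_cycle n1 (ss_cycle v)) +
      dyck_weight (p * q) v * indicator {v. take (n1 - 1) v = replicate (n1 - 1) True} v)"
    unfolding dyck_gf[symmetric] by (rule nn_integral_cong) (rule split)
  also have "\<dots> = A + ennreal (q ^ (n1 - 1) / p)"
    by (simp add: nn_integral_add A_def dyck_gf_S_prefix)
  finally have "ennreal (1 / p) = A + ennreal (q ^ (n1 - 1) / p)" .
  then have "A = ennreal (1 / p) - ennreal (q ^ (n1 - 1) / p)" by simp
  also have "\<dots> = ennreal (1 / p - q ^ (n1 - 1) / p)" using p_pos q_pos by (simp add: ennreal_minus)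
  finally show ?thesis unfolding A_def .
qed

lemma nn_integral_U_cycle: "(\<integral>\<^sup>+x. ennreal (U_cycle n1 x) \<partial>M) = ennreal (q - q ^ (n1 + 1))"
proof -
  have "q ^ (n1 - 1) \<le> 1" using q_pos q_less_p p_plus_q by (simp add: power_le_one)
  then have nonneg: "0 \<le> 1 / p - q ^ (n1 - 1) / p" using p_pos by (simp add: diff_divide_distrib[symmetric])
  have "(\<integral>\<^sup>+x. ennreal (U_cycle n1 x) \<partial>M) =
      ennreal (p * q^2 + \<gamma> * p^2 * q + (1 - \<gamma>) * p^2 * q + q^2 * p * (1 / p - q ^ (n1 - 1) / p))"
    using nn_integral_cycle_pmf[OF _ nonneg esum_U_cycle_ss_cycle] by (simp add: U_cycle_def)
  also have "p * q^2 + \<gamma> * p^2 * q + (1 - \<gamma>) * p^2 * q + q^2 * p * (1 / p - q ^ (n1 - 1) / p) =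
      p * q * (p + q) + q^2 - q^2 * q ^ (n1 - 1)"
    using p_pos by (simp add: field_simps power2_eq_square)
  also have "\<dots> = q - q ^ (n1 + 1)"
  proof -
    have "p * q * (p + q) + q^2 = q * (p * (p + q) + q)" by (simp add: algebra_simps power2_eq_square)
    also have "\<dots> = q" using p_plus_q by simp
    finally have "p * q * (p + q) + q^2 = q" .
    moreover have "q^2 * q ^ (n1 - 1) = q ^ (n1 + 1)"
      using two_le_n1 by (simp add: power_add[symmetric])
    ultimately show ?thesis by simp
  qed
  finally show ?thesis .
qed

lemma nn_integral_U_h_cycles_second:
  "(\<integral>\<^sup>+y. ennreal (U_h_cycles n1 x y) \<partial>M) = ennreal (of_bool (x \<in> {cycle_SHH_on_S, cycle_SHH_on_H})
     + of_bool (x \<in> ss_cycle ` mountain ` {..<n1 - 1}) * (p + (1 - \<gamma>) * p^2 * q))"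
proof (cases "x \<in> ss_cycle ` mountain ` {..<n1 - 1}")
  case True
  then have "x \<notin> {cycle_SHH_on_S, cycle_SHH_on_H}" by auto
  then have "U_h_cycles n1 x y = of_bool (honest_first y)" for y
    using True by (simp add: U_h_cycles_def)
  then show ?thesis using True \<open>x \<notin> {cycle_SHH_on_S, cycle_SHH_on_H}\<close> nn_integral_honest_first by simp
next
  case False
  then show ?thesis by (simp add: U_h_cycles_def measure_pmf.emeasure_space_1)
qed

lemma nn_integral_U_h_cycles:
  "(\<integral>\<^sup>+x. (\<integral>\<^sup>+y. ennreal (U_h_cycles n1 x y) \<partial>M) \<partial>M) =
    ennreal (p^2 * q + (p + (1 - \<gamma>) * p^2 * q) * p * q^2 * (1 - (p * q) ^ (n1 - 1)) / (1 - p * q))"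
proof -
  define P where "P = p + (1 - \<gamma>) * p^2 * q"
  define S where "S = (\<Sum>a<n1 - 1. (p * q) ^ a)"
  define H where "H x = of_bool (x \<in> {cycle_SHH_on_S, cycle_SHH_on_H}) + of_bool (x \<in> ss_cycle ` mountain ` {..<n1 - 1}) * P"
    for x
  have P: "0 \<le> P" using p_pos q_pos gamma_le_1 by (simp add: P_def)
  have S: "0 \<le> S" using pq_nonneg by (simp add: S_def sum_nonneg)
  have H: "0 \<le> H x" for x using P by (simp add: H_def)
  have "esum (\<lambda>v. dyck_weight (p * q) v * ennreal (H (ss_cycle v))) =
      esum (\<lambda>v. ennreal P * (dyck_weight (p * q) v * indicator (mountain ` {..<n1 - 1}) v))"
  proof (rule nn_integral_cong)
    fix v :: "bool list"
    have "H (ss_cycle v) = of_bool (v \<in> mountain ` {..<n1 - 1}) * P"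
      by (simp add: H_def inj_image_mem_iff[OF inj_ss_cycle])
    then show "dyck_weight (p * q) v * ennreal (H (ss_cycle v)) =
        ennreal P * (dyck_weight (p * q) v * indicator (mountain ` {..<n1 - 1}) v)"
      by (simp add: indicator_def mult.commute)
  qed
  also have "\<dots> = ennreal (P * S)"
    using P S by (simp add: nn_integral_cmult dyck_gf_mountains S_def ennreal_mult)
  finally have "(\<integral>\<^sup>+x. ennreal (H x) \<partial>M) = ennreal (p * H cycle_H + p * q^2 * H cycle_SHS
      + \<gamma> * p^2 * q * H cycle_SHH_on_S + (1 - \<gamma>) * p^2 * q * H cycle_SHH_on_H + q^2 * p * (P * S))"
    using P S H by (intro nn_integral_cycle_pmf) (simp_all add: mult_nonneg_nonneg)
  also have "p * H cycle_H + p * q^2 * H cycle_SHS + \<gamma> * p^2 * q * H cycle_SHH_on_S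
      + (1 - \<gamma>) * p^2 * q * H cycle_SHH_on_H + q^2 * p * (P * S) = p^2 * q + P * p * q^2 * S"
    by (simp add: H_def image_iff algebra_simps)
  also have "S = (1 - (p * q) ^ (n1 - 1)) / (1 - p * q)"
    unfolding S_def using pq_less_1 by (simp add: sum_gp_strict)
  finally show ?thesis
    by (simp add: nn_integral_U_h_cycles_second H_def P_def times_divide_eq_right)
qed

lemma U_at_regular_cycles:
  assumes "x \<in> set_pmf (cycle_pmf p q \<gamma>)" "y \<in> set_pmf (cycle_pmf p q \<gamma>)"
  shows "U n1 (x ## y ## X) = U_cycle n1 x" "U_h n1 (x ## y ## X) = U_h_cycles n1 x y"
    "U_s n1 (x ## y ## X) = U_cycle n1 x - U_h_cycles n1 x y"
  using U_values[OF assms[THEN regular_cycle_if_in_set_pmf]] two_le_n1 by simp_all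

lemma U_expectation_nonneg: "0 \<le> q - q ^ (n1 + 1)"
  using power_decreasing[of 1 "n1 + 1" q] q_pos q_less_p p_plus_q by simp

lemma U_h_expectation_nonneg:
  "0 \<le> p^2 * q + (p + (1 - \<gamma>) * p^2 * q) * p * q^2 * (1 - (p * q) ^ (n1 - 1)) / (1 - p * q)"
proof -
  have "(p * q) ^ (n1 - 1) \<le> 1" using pq_nonneg pq_less_1 by (simp add: power_le_one)
  then show ?thesis using p_pos q_pos gamma_le_1 pq_less_1 by (simp add: divide_nonneg_pos)
qed

lemma integral_U: "integral\<^sup>L (stream_space M) (U n1) = q - q ^ (n1 + 1)"
proof -
  have "integral\<^sup>L (stream_space M) (U n1) = enn2real (\<integral>\<^sup>+x. (\<integral>\<^sup>+y. ennreal (U_cycle n1 x) \<partial>M) \<partial>M)"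
    by (rule integral_stream_space_two_heads[OF measurable_U(1)]) (simp add: U_def, simp add: U_at_regular_cycles)
  then show ?thesis
    using nn_integral_U_cycle U_expectation_nonneg by (simp add: measure_pmf.emeasure_space_1)
qed

lemma integral_U_h: "integral\<^sup>L (stream_space M) (U_h n1) =
    p^2 * q + (p + (1 - \<gamma>) * p^2 * q) * p * q^2 * (1 - (p * q) ^ (n1 - 1)) / (1 - p * q)"
proof -
  have "integral\<^sup>L (stream_space M) (U_h n1) = enn2real (\<integral>\<^sup>+x. (\<integral>\<^sup>+y. ennreal (U_h_cycles n1 x y) \<partial>M) \<partial>M)"
    by (rule integral_stream_space_two_heads[OF measurable_U(2)]) (simp add: U_h_def, simp add: U_at_regular_cycles)
  then show ?thesis using nn_integral_U_h_cycles U_h_expectation_nonneg by simp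
qed

text \<open>\<open>U_s = U - U_h\<close> holds pointwise on the support, but \<open>U\<close> is not known to be integrable a
  priori, so the difference is taken on the level of nonnegative integrals.\<close>
lemma integral_U_s: "integral\<^sup>L (stream_space M) (U_s n1) = integral\<^sup>L (stream_space M) (U n1) - integral\<^sup>L (stream_space M) (U_h n1)"
proof -
  define u where "u = q - q ^ (n1 + 1)"
  define h where "h = p^2 * q + (p + (1 - \<gamma>) * p^2 * q) * p * q^2 * (1 - (p * q) ^ (n1 - 1)) / (1 - p * q)"
  define E where "E = (\<integral>\<^sup>+x. (\<integral>\<^sup>+y. ennreal (U_cycle n1 x - U_h_cycles n1 x y) \<partial>M) \<partial>M)"
  have le: "U_h_cycles n1 x y \<le> U_cycle n1 x" for x y
    by (auto simp: U_h_cycles_def U_cycle_def ss_uncle_def S_run_mountain)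
  have split: "ennreal (U_cycle n1 x) = ennreal (U_h_cycles n1 x y) + ennreal (U_cycle n1 x - U_h_cycles n1 x y)"
    for x y using le[of x y] by (subst ennreal_plus[symmetric]) (auto simp: U_h_cycles_def)
  have "ennreal u = (\<integral>\<^sup>+x. (\<integral>\<^sup>+y. ennreal (U_cycle n1 x) \<partial>M) \<partial>M)"
    using nn_integral_U_cycle by (simp add: u_def measure_pmf.emeasure_space_1)
  also have "\<dots> = (\<integral>\<^sup>+x. (\<integral>\<^sup>+y. ennreal (U_h_cycles n1 x y) + ennreal (U_cycle n1 x - U_h_cycles n1 x y) \<partial>M) \<partial>M)"
    by (intro nn_integral_cong) (rule split)
  also have "\<dots> = ennreal h + E"
    unfolding E_def h_def nn_integral_U_h_cycles[symmetric] by (simp add: nn_integral_add)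
  finally have sum: "ennreal u = ennreal h + E" .
  then obtain s where s: "E = ennreal s" "0 \<le> s" by (cases E rule: ennreal_cases) auto
  then have "u = h + s" using sum U_expectation_nonneg U_h_expectation_nonneg
    by (simp add: u_def h_def flip: ennreal_plus)
  moreover have "integral\<^sup>L (stream_space M) (U_s n1) = enn2real E"
    unfolding E_def
    by (rule integral_stream_space_two_heads[OF measurable_U(3)]) (simp add: U_s_def, simp add: U_at_regular_cycles)
  ultimately show ?thesis using s integral_U integral_U_h by (simp add: u_def h_def)
qed

end

end

theorem corollary3:
  fixes p q \<gamma> :: real and n1 :: nat
  assumes "0 < q" "q < p" "p + q = 1" "0 \<le> \<gamma>" "\<gamma> \<le> 1" "2 \<le> n1"
  shows "(\<integral>xs. U_s n1 xs \<partial>stream_space (measure_pmf (cycle_pmf p q \<gamma>)))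
           = (\<integral>xs. U n1 xs \<partial>stream_space (measure_pmf (cycle_pmf p q \<gamma>)))
             - (\<integral>xs. U_h n1 xs \<partial>stream_space (measure_pmf (cycle_pmf p q \<gamma>)))
       \<and> (\<integral>xs. U n1 xs \<partial>stream_space (measure_pmf (cycle_pmf p q \<gamma>)))
             - (\<integral>xs. U_h n1 xs \<partial>stream_space (measure_pmf (cycle_pmf p q \<gamma>)))
           = q - q ^ (n1 + 1)
             - (p^2 * q + (p + (1 - \<gamma>) * p^2 * q) * p * q^2 * (1 - (p * q) ^ (n1 - 1)) / (1 - p * q))"
proof -
  interpret attack p q \<gamma>
    using assms by unfold_locales auto
  show ?thesis
    using integral_U_s[OF assms(6)] integral_U[OF assms(6)] integral_U_h[OF assms(6)] by simp
qed

end
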